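(* Let $E$ be a finite-dimensional real affine space and let $G(E)$ be the set of generalized affine functions on $E$, equipped with the topology of pointwise convergence. Then $G(E)$ is a first countable topological space.
   Context: A generalized affine function on $E$ is a function $E\to\overline{\mathbb{R}}=\mathbb{R}\cup\{\pm\infty\}$ that is both convex and concave (extended-real-valued sense). The topology of pointwise convergence is the subspace topology from the product topology on $\overline{\mathbb{R}}^{E}$, with $\overline{\mathbb{R}}$ carrying its usual order topology. *)

theory Defs
  imports "HOL-Analysis.Analysis"
begin

definition ereal_convex :: "('a::real_vector \<Rightarrow> ereal) \<Rightarrow> bool" where
  "ereal_convex f \<longleftrightarrow> convex {(x, \<mu>::real). f x \<le> ereal \<mu>}"

definition ereal_concave :: "('a::real_vector \<Rightarrow> ereal) \<Rightarrow> bool" where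
  "ereal_concave f \<longleftrightarrow> convex {(x, \<mu>::real). ereal \<mu> \<le> f x}"

definition generalized_affine :: "('a::real_vector \<Rightarrow> ereal) set" where
  "generalized_affine = {f. ereal_convex f \<and> ereal_concave f}"

definition pointwise_topology_G :: "('a::real_vector \<Rightarrow> ereal) topology" where
  "pointwise_topology_G =
     subtopology (product_topology (\<lambda>_. (euclidean :: ereal topology)) UNIV) generalized_affine"

end

theory Submission
  imports Defs
begin

(* For a generalized affine function f, the set P = {x. f x > -infinity} is a hemispace: both P and
   its complement are convex. Every hemispace of a Euclidean space is the convex hull of a countable
   subset: its relative interior is covered by the hull of a countable dense subset, and the rest,
   P intersected with the closure of its complement, is again a hemispace of smaller affine dimension.
   On a segment, the value of a generalized affine function g is controlled by its values at the end
   points, uniformly for g near f (by affinity where f is finite, by monotonicity where f is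
   infinite). Hence on P, and symmetrically where f < infinity, the values of g near f are controlled
   by finitely many of its values on a countable set D, and the basic neighbourhoods of f that only
   constrain points of D form a countable local base. *)

lemma rel_interior_eq_diff_closure:
  fixes P :: "'a::euclidean_space set"
  shows "rel_interior P = P - closure (affine hull P - P)"
  by (auto simp: mem_rel_interior_ball closure_approachable subset_iff dist_commute) blast+

lemma affine_hull_disjoint_rel_interior:
  fixes P R :: "'a::euclidean_space set"
  assumes "convex P" "convex R" "R \<subseteq> P - rel_interior P"
  shows "affine hull R \<inter> rel_interior P = {}"
proof (intro equals0I)
  fix p assume p: "p \<in> affine hull R \<inter> rel_interior P"
  then have "R \<noteq> {}" by auto
  then obtain r where r: "r \<in> rel_interior R"
    using rel_interior_eq_empty[OF assms(2)] by blast
  then obtain e where e: "e > 1" and r': "(1 - e) *\<^sub>R p + e *\<^sub>R r \<in> R"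
    using convex_rel_interior_if2[OF assms(2) r] p by blast
  (* r' lies beyond r on the ray from p, so shrinking r' towards p \<in> rel_interior P gives back r *)
  define r' where "r' = (1 - e) *\<^sub>R p + e *\<^sub>R r"
  have "r' - (1 - 1 / e) *\<^sub>R (r' - p) \<in> rel_interior P"
    using r' assms(3) p e unfolding r'_def
    by (intro rel_interior_convex_shrink[OF assms(1)]) auto
  moreover have "r' - (1 - 1 / e) *\<^sub>R (r' - p) = r"
    using e by (simp add: r'_def algebra_simps)
  ultimately show False
    using r rel_interior_subset assms(3) by blast
qed

lemma rel_interior_subset_convex_hull_countable:
  fixes P :: "'a::euclidean_space set"
  assumes "convex P"
  obtains Q where "countable Q" "Q \<subseteq> P" "rel_interior P \<subseteq> convex hull Q"
proof -
  obtain Q where Q: "countable Q" "Q \<subseteq> P" "P \<subseteq> closure Q"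
    by (rule separable)
  define C where "C = convex hull Q"
  have "C \<subseteq> P"
    unfolding C_def using Q(2) assms by (rule hull_minimal)
  moreover have PC: "P \<subseteq> closure C"
    unfolding C_def using Q(3) closure_mono[OF hull_subset] by blast
  ultimately have "affine hull P = affine hull (closure C)"
    by (metis closure_same_affine_hull hull_mono subset_antisym)
  then have "rel_interior P \<subseteq> rel_interior (closure C)"
    by (rule subset_rel_interior[OF PC])
  also have "\<dots> \<subseteq> C"
    unfolding C_def by (simp add: convex_rel_interior_closure rel_interior_subset)
  finally show ?thesis
    using that Q C_def by blast
qed

lemma relative_hemispace_countable_hull:
  fixes P :: "'a::euclidean_space set"
  assumes "convex P" "convex (affine hull P - P)"
  obtains Q where "countable Q" "Q \<subseteq> P" "P \<subseteq> convex hull Q"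
  using assms
proof (induction "nat (aff_dim P + 1)" arbitrary: P thesis rule: less_induct)
  case less
  obtain Q1 where Q1: "countable Q1" "Q1 \<subseteq> P" "rel_interior P \<subseteq> convex hull Q1"
    by (rule rel_interior_subset_convex_hull_countable[OF less.prems(2)])
  (* the relative boundary of P: convex since the complement is, and of smaller dimension *)
  define R where "R = P \<inter> closure (affine hull P - P)"
  have R_eq: "R = P - rel_interior P"
    unfolding R_def rel_interior_eq_diff_closure[of P] by blast
  have R_convex: "convex R"
    unfolding R_def by (intro convex_Int convex_closure less.prems(2,3))
  have RP: "R \<subseteq> P"
    unfolding R_eq by blast
  have disj: "affine hull R \<inter> rel_interior P = {}"
    by (rule affine_hull_disjoint_rel_interior[OF less.prems(2) R_convex]) (simp add: R_eq)
  have hull_R: "affine hull R \<subseteq> affine hull P"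
    using RP by (rule hull_mono)
  have "affine hull R - R = affine hull R \<inter> (affine hull P - P)"
    using disj hull_R unfolding R_eq by blast
  then have R_hemi: "convex (affine hull R - R)"
    using less.prems(3) by (simp add: convex_Int)
  show ?case
  proof (cases "R = {}")
    case True
    then have "P \<subseteq> convex hull Q1"
      using Q1(3) unfolding R_eq by blast
    with Q1(1,2) show ?thesis
      by (rule less.prems(1))
  next
    case False
    have "affine hull R \<noteq> affine hull P"
    proof
      assume "affine hull R = affine hull P"
      then have "rel_interior P = {}"
        using disj rel_interior_subset[of P] hull_subset[of P affine] by blast
      then have "P = {}"
        using rel_interior_eq_empty[OF less.prems(2)] by simp
      then show False
        using False RP by blast
    qed
    then have "aff_dim R < aff_dim P"
      using hull_R by (intro aff_dim_psubset) blast
    then have dim_less: "nat (aff_dim R + 1) < nat (aff_dim P + 1)"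
      using aff_dim_geq[of R] by linarith
    obtain Q2 where Q2: "countable Q2" "Q2 \<subseteq> R" "R \<subseteq> convex hull Q2"
      by (rule less.hyps[OF dim_less _ R_convex R_hemi])
    have "convex hull Q1 \<union> convex hull Q2 \<subseteq> convex hull (Q1 \<union> Q2)"
      by (simp add: hull_mono)
    moreover have "P \<subseteq> rel_interior P \<union> R"
      unfolding R_eq by blast
    ultimately have "P \<subseteq> convex hull (Q1 \<union> Q2)"
      using Q1(3) Q2(3) by blast
    moreover have "countable (Q1 \<union> Q2)" "Q1 \<union> Q2 \<subseteq> P"
      using Q1(1,2) Q2(1,2) RP by auto
    ultimately show ?thesis
      using less.prems(1) by blast
  qed
qed

lemma hemispace_countable_hull:
  fixes P :: "'a::euclidean_space set"
  assumes "convex P" "convex (- P)"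
  obtains Q where "countable Q" "Q \<subseteq> P" "P \<subseteq> convex hull Q"
proof -
  have "convex (affine hull P - P)"
    using assms(2) by (simp add: Diff_eq convex_Int convex_affine_hull)
  then show ?thesis
    using relative_hemispace_countable_hull[OF assms(1)] that by blast
qed

lemma generalized_affine_uminus:
  assumes "f \<in> generalized_affine"
  shows "(\<lambda>x. - f x) \<in> generalized_affine"
proof -
  let ?flip = "\<lambda>(x::'a, \<mu>::real). (x, - \<mu>)"
  have lin: "linear ?flip"
    by (auto simp: linear_iff)
  have "- f x \<le> ereal \<mu> \<longleftrightarrow> ereal (- \<mu>) \<le> f x" "ereal \<mu> \<le> - f x \<longleftrightarrow> f x \<le> ereal (- \<mu>)"
    for x \<mu>
    by (cases "f x"; auto)+
  then have "{(x, \<mu>). - f x \<le> ereal \<mu>} = ?flip -` {(x, \<mu>). ereal \<mu> \<le> f x}"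
    "{(x, \<mu>). ereal \<mu> \<le> - f x} = ?flip -` {(x, \<mu>). f x \<le> ereal \<mu>}"
    by auto
  moreover have "convex {(x, \<mu>::real). f x \<le> ereal \<mu>}" "convex {(x, \<mu>::real). ereal \<mu> \<le> f x}"
    using assms by (simp_all add: generalized_affine_def ereal_convex_def ereal_concave_def)
  ultimately show ?thesis
    unfolding generalized_affine_def ereal_convex_def ereal_concave_def mem_Collect_eq
    by (metis convex_linear_vimage[OF lin])
qed

lemma generalized_affine_le_combination:
  assumes "f \<in> generalized_affine" "f y \<le> ereal a" "f z \<le> ereal b"
    and "0 \<le> u" "0 \<le> v" "u + v = 1"
  shows "f (u *\<^sub>R y + v *\<^sub>R z) \<le> ereal (u * a + v * b)"
proof -
  have "convex {(x, \<mu>::real). f x \<le> ereal \<mu>}"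
    using assms(1) by (simp add: generalized_affine_def ereal_convex_def)
  then have "u *\<^sub>R (y, a) + v *\<^sub>R (z, b) \<in> {(x, \<mu>::real). f x \<le> ereal \<mu>}"
    using assms(2-6) by (intro convexD) auto
  then show ?thesis
    by simp
qed

lemma generalized_affine_ge_combination:
  assumes "f \<in> generalized_affine" "ereal a \<le> f y" "ereal b \<le> f z"
    and "0 \<le> u" "0 \<le> v" "u + v = 1"
  shows "ereal (u * a + v * b) \<le> f (u *\<^sub>R y + v *\<^sub>R z)"
proof -
  have "- f y \<le> ereal (- a)"
    using assms(2) by (cases "f y") auto
  moreover have "- f z \<le> ereal (- b)"
    using assms(3) by (cases "f z") auto
  ultimately have "- f (u *\<^sub>R y + v *\<^sub>R z) \<le> ereal (u * - a + v * - b)"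
    by (rule generalized_affine_le_combination[OF generalized_affine_uminus[OF assms(1)] _ _ assms(4-6)])
  then show ?thesis
    by (cases "f (u *\<^sub>R y + v *\<^sub>R z)") auto
qed

lemma generalized_affine_eq_combination:
  assumes "f \<in> generalized_affine" "f y = ereal a" "f z = ereal b"
    and "0 \<le> u" "0 \<le> v" "u + v = 1"
  shows "f (u *\<^sub>R y + v *\<^sub>R z) = ereal (u * a + v * b)"
  using generalized_affine_le_combination[OF assms(1) _ _ assms(4-6)]
    generalized_affine_ge_combination[OF assms(1) _ _ assms(4-6)] assms(2,3)
  by (simp add: order_antisym)

lemma generalized_affine_PInf_combination:
  assumes "f \<in> generalized_affine" "f y = \<infinity>" "f z \<noteq> -\<infinity>"
    and "0 < u" "0 \<le> v" "u + v = 1"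
  shows "f (u *\<^sub>R y + v *\<^sub>R z) = \<infinity>"
proof (rule ereal_top)
  fix c
  obtain b where b: "ereal b \<le> f z"
    using assms(3) by (cases "f z") auto
  have "u * ((c - v * b) / u) + v * b = c"
    using assms(4) by simp
  moreover have "ereal (u * ((c - v * b) / u) + v * b) \<le> f (u *\<^sub>R y + v *\<^sub>R z)"
    using assms(2,5,6) less_imp_le[OF assms(4)] b
    by (intro generalized_affine_ge_combination[OF assms(1)]) simp_all
  ultimately show "ereal c \<le> f (u *\<^sub>R y + v *\<^sub>R z)"
    by simp
qed

lemma convex_generalized_affine_not_MInf:
  assumes "f \<in> generalized_affine"
  shows "convex {x. f x \<noteq> -\<infinity>}"
proof (rule convexI)
  fix y z and u v :: real
  assume "y \<in> {x. f x \<noteq> -\<infinity>}" "z \<in> {x. f x \<noteq> -\<infinity>}" and uv: "0 \<le> u" "0 \<le> v" "u + v = 1"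
  then obtain a b where "ereal a \<le> f y" "ereal b \<le> f z"
    by (cases "f y"; cases "f z") auto
  then have "ereal (u * a + v * b) \<le> f (u *\<^sub>R y + v *\<^sub>R z)"
    using uv by (rule generalized_affine_ge_combination[OF assms])
  then show "u *\<^sub>R y + v *\<^sub>R z \<in> {x. f x \<noteq> -\<infinity>}"
    by auto
qed

lemma convex_generalized_affine_PInf:
  assumes "f \<in> generalized_affine"
  shows "convex {x. f x = \<infinity>}"
proof (rule convexI)
  fix y z and u v :: real
  assume "y \<in> {x. f x = \<infinity>}" "z \<in> {x. f x = \<infinity>}" and uv: "0 \<le> u" "0 \<le> v" "u + v = 1"
  then show "u *\<^sub>R y + v *\<^sub>R z \<in> {x. f x = \<infinity>}"
    using generalized_affine_PInf_combination[OF assms, of y z u v]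
    by (cases "u = 0") auto
qed

definition basic_nhd :: "('a \<Rightarrow> 'b::topological_space) \<Rightarrow> 'a set \<Rightarrow> ('a \<Rightarrow> 'b set) \<Rightarrow> bool" where
  "basic_nhd f D V \<longleftrightarrow>
     finite {d. V d \<noteq> UNIV} \<and> {d. V d \<noteq> UNIV} \<subseteq> D \<and> (\<forall>d. open (V d) \<and> f d \<in> V d)"

definition determined_by :: "('a \<Rightarrow> 'b::topological_space) set \<Rightarrow> ('a \<Rightarrow> 'b) \<Rightarrow> 'a set \<Rightarrow> 'a \<Rightarrow> bool" where
  "determined_by S f D x \<longleftrightarrow>
     (\<forall>U. open U \<longrightarrow> f x \<in> U \<longrightarrow> (\<exists>V. basic_nhd f D V \<and> (\<forall>g\<in>S. (\<forall>d. g d \<in> V d) \<longrightarrow> g x \<in> U)))"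

lemma basic_nhd_UNIV: "basic_nhd f D (\<lambda>_. UNIV)"
  by (simp add: basic_nhd_def)

lemma basic_nhd_Int:
  assumes "basic_nhd f D V" "basic_nhd f D W"
  shows "basic_nhd f D (\<lambda>d. V d \<inter> W d)"
proof -
  have "{d. V d \<inter> W d \<noteq> UNIV} \<subseteq> {d. V d \<noteq> UNIV} \<union> {d. W d \<noteq> UNIV}"
    by auto
  then show ?thesis
    using assms unfolding basic_nhd_def by (auto intro: finite_subset)
qed

lemma openin_basic_nhd:
  assumes "basic_nhd f D V"
  shows "openin (product_topology (\<lambda>_. euclidean) UNIV) {g. \<forall>d. g d \<in> V d}"
proof -
  have "{g. \<forall>d. g d \<in> V d} = Pi\<^sub>E UNIV V"
    by (auto simp: PiE_UNIV_domain)
  then show ?thesis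
    using assms by (simp add: basic_nhd_def openin_PiE_gen)
qed

lemma openin_subtopology_product_topology_basic_nhd:
  assumes "openin (subtopology (product_topology (\<lambda>_. euclidean) UNIV) S) U" "f \<in> U"
  obtains W where "basic_nhd f UNIV W" "S \<inter> {g. \<forall>i. g i \<in> W i} \<subseteq> U"
proof -
  obtain T where T: "openin (product_topology (\<lambda>_. euclidean) UNIV) T" "U = T \<inter> S"
    using assms(1) by (auto simp: openin_subtopology)
  then obtain W where "finite {i. W i \<noteq> UNIV}" "\<forall>i. open (W i)" "f \<in> Pi\<^sub>E UNIV W" "Pi\<^sub>E UNIV W \<subseteq> T"
    using assms(2) unfolding openin_product_topology_alt by auto
  then have "basic_nhd f UNIV W" "S \<inter> {g. \<forall>i. g i \<in> W i} \<subseteq> U"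
    using T(2) by (auto simp: basic_nhd_def PiE_UNIV_domain Pi_iff)
  then show ?thesis
    by (rule that)
qed

lemma determined_by_mem:
  assumes "x \<in> D"
  shows "determined_by S f D x"
  unfolding determined_by_def
proof (intro allI impI)
  fix U assume "open U" "f x \<in> U"
  define V where "V d = (if d = x then U else UNIV)" for d
  have "basic_nhd f D V"
    using assms \<open>open U\<close> \<open>f x \<in> U\<close> by (auto simp: basic_nhd_def V_def)
  moreover have "\<forall>g\<in>S. (\<forall>d. g d \<in> V d) \<longrightarrow> g x \<in> U"
    by (auto simp: V_def dest: spec[of _ x])
  ultimately show "\<exists>V. basic_nhd f D V \<and> (\<forall>g\<in>S. (\<forall>d. g d \<in> V d) \<longrightarrow> g x \<in> U)"
    by (intro exI conjI)
qed

lemma determined_by_pair: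
  assumes "determined_by S f D y" "determined_by S f D z"
    and "\<And>U. open U \<Longrightarrow> f x \<in> U \<Longrightarrow>
      \<exists>A B. open A \<and> f y \<in> A \<and> open B \<and> f z \<in> B \<and> (\<forall>g\<in>S. g y \<in> A \<longrightarrow> g z \<in> B \<longrightarrow> g x \<in> U)"
  shows "determined_by S f D x"
  unfolding determined_by_def
proof (intro allI impI)
  fix U assume "open U" "f x \<in> U"
  obtain A B where "open A" "f y \<in> A" "open B" "f z \<in> B"
    and AB: "\<forall>g\<in>S. g y \<in> A \<longrightarrow> g z \<in> B \<longrightarrow> g x \<in> U"
    using assms(3)[OF \<open>open U\<close> \<open>f x \<in> U\<close>] by blast
  obtain V where V: "basic_nhd f D V" "\<forall>g\<in>S. (\<forall>d. g d \<in> V d) \<longrightarrow> g y \<in> A"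
    using assms(1) \<open>open A\<close> \<open>f y \<in> A\<close> unfolding determined_by_def by blast
  obtain W where W: "basic_nhd f D W" "\<forall>g\<in>S. (\<forall>d. g d \<in> W d) \<longrightarrow> g z \<in> B"
    using assms(2) \<open>open B\<close> \<open>f z \<in> B\<close> unfolding determined_by_def by blast
  have "basic_nhd f D (\<lambda>d. V d \<inter> W d)"
    using V(1) W(1) by (rule basic_nhd_Int)
  then show "\<exists>V. basic_nhd f D V \<and> (\<forall>g\<in>S. (\<forall>d. g d \<in> V d) \<longrightarrow> g x \<in> U)"
    using AB V(2) W(2) by (intro exI[of _ "\<lambda>d. V d \<inter> W d"]) auto
qed

lemma determined_by_uminus:
  fixes f :: "'a \<Rightarrow> ereal"
  assumes "determined_by S (\<lambda>x. - f x) D x" "\<And>g. g \<in> S \<Longrightarrow> (\<lambda>x. - g x) \<in> S"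
  shows "determined_by S f D x"
  unfolding determined_by_def
proof (intro allI impI)
  fix U assume "open U" "f x \<in> U"
  then have "open (uminus ` U)" "- f x \<in> uminus ` U"
    by (auto simp: ereal_open_uminus)
  then obtain V where V: "basic_nhd (\<lambda>x. - f x) D V"
    and VU: "\<forall>g\<in>S. (\<forall>d. g d \<in> V d) \<longrightarrow> g x \<in> uminus ` U"
    using assms(1) unfolding determined_by_def by blast
  have neg_UNIV: "uminus ` A = UNIV \<longleftrightarrow> A = (UNIV :: ereal set)" for A
  proof
    assume "uminus ` A = UNIV"
    then have "uminus ` uminus ` A = UNIV"
      by (metis ereal_uminus_uminus surjI)
    then show "A = UNIV"
      by (simp add: image_image)
  qed (metis ereal_uminus_uminus surjI)
  have "basic_nhd f D (\<lambda>d. uminus ` V d)"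
    using V by (auto simp: basic_nhd_def neg_UNIV ereal_open_uminus image_iff) (metis ereal_uminus_uminus)
  moreover have "\<forall>g\<in>S. (\<forall>d. g d \<in> uminus ` V d) \<longrightarrow> g x \<in> U"
  proof (intro ballI impI)
    fix g assume g: "g \<in> S" "\<forall>d. g d \<in> uminus ` V d"
    have "- g d \<in> V d" for d
      using g(2)[rule_format, of d] by auto
    then have "- g x \<in> uminus ` U"
      using VU assms(2)[OF g(1)] by fastforce
    then show "g x \<in> U"
      by (auto simp: image_iff)
  qed
  ultimately show "\<exists>V. basic_nhd f D V \<and> (\<forall>g\<in>S. (\<forall>d. g d \<in> V d) \<longrightarrow> g x \<in> U)"
    by (intro exI conjI)
qed

lemma determined_by_basic_nhd:
  assumes "\<And>x. determined_by S f D x" "basic_nhd f UNIV W"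
  obtains V where "basic_nhd f D V" "\<forall>g\<in>S. (\<forall>d. g d \<in> V d) \<longrightarrow> (\<forall>i. g i \<in> W i)"
proof -
  have "\<exists>V. basic_nhd f D V \<and> (\<forall>g\<in>S. (\<forall>d. g d \<in> V d) \<longrightarrow> (\<forall>i\<in>J. g i \<in> W i))"
    if "finite J" for J
    using that
  proof (induction J rule: finite_induct)
    case empty
    show ?case
      using basic_nhd_UNIV by blast
  next
    case (insert i J)
    obtain V where V: "basic_nhd f D V" "\<forall>g\<in>S. (\<forall>d. g d \<in> V d) \<longrightarrow> (\<forall>i\<in>J. g i \<in> W i)"
      using insert.IH by blast
    have "open (W i)" "f i \<in> W i"
      using assms(2) by (auto simp: basic_nhd_def)
    then obtain V' where V': "basic_nhd f D V'" "\<forall>g\<in>S. (\<forall>d. g d \<in> V' d) \<longrightarrow> g i \<in> W i"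
      using assms(1)[of i] unfolding determined_by_def by blast
    have "basic_nhd f D (\<lambda>d. V d \<inter> V' d)"
      using V(1) V'(1) by (rule basic_nhd_Int)
    then show ?case
      using V(2) V'(2) by (intro exI[of _ "\<lambda>d. V d \<inter> V' d"]) auto
  qed
  moreover have "finite {i. W i \<noteq> UNIV}"
    using assms(2) by (simp add: basic_nhd_def)
  ultimately obtain V where V: "basic_nhd f D V"
    "\<forall>g\<in>S. (\<forall>d. g d \<in> V d) \<longrightarrow> (\<forall>i\<in>{i. W i \<noteq> UNIV}. g i \<in> W i)"
    by blast
  have "\<forall>g\<in>S. (\<forall>d. g d \<in> V d) \<longrightarrow> (\<forall>i. g i \<in> W i)"
  proof (intro ballI impI allI)
    fix g i assume "g \<in> S" "\<forall>d. g d \<in> V d"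
    then show "g i \<in> W i"
      using V(2) by (cases "W i = UNIV") auto
  qed
  then show ?thesis
    by (rule that[OF V(1)])
qed

lemma first_countable_subtopology_product_topology:
  fixes S :: "('a \<Rightarrow> 'b::first_countable_topology) set"
  assumes "\<And>f. f \<in> S \<Longrightarrow> \<exists>D. countable D \<and> (\<forall>x. determined_by S f D x)"
  shows "first_countable (subtopology (product_topology (\<lambda>_. euclidean) UNIV) S)"
  unfolding first_countable_def
proof
  let ?X = "subtopology (product_topology (\<lambda>_. euclidean) UNIV) S"
  fix f assume "f \<in> topspace ?X"
  then have f: "f \<in> S"
    by simp
  then obtain D where D: "countable D" "\<And>x. determined_by S f D x"
    using assms by blast
  obtain B :: "'a \<Rightarrow> nat \<Rightarrow> 'b set" where
    B: "\<And>d i. f d \<in> B d i \<and> open (B d i)" "\<And>d W. open W \<Longrightarrow> f d \<in> W \<Longrightarrow> \<exists>i. B d i \<subseteq> W"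
  proof -
    have "\<forall>d. \<exists>A::nat \<Rightarrow> 'b set. (\<forall>i. f d \<in> A i \<and> open (A i)) \<and> (\<forall>W. open W \<and> f d \<in> W \<longrightarrow> (\<exists>i. A i \<subseteq> W))"
      using first_countable_basis by blast
    then obtain B :: "'a \<Rightarrow> nat \<Rightarrow> 'b set" where
      "\<forall>d. (\<forall>i. f d \<in> B d i \<and> open (B d i)) \<and> (\<forall>W. open W \<and> f d \<in> W \<longrightarrow> (\<exists>i. B d i \<subseteq> W))"
      by (rule choice[THEN exE])
    then show ?thesis
      using that by blast
  qed
  define nhd where "nhd \<Phi> d = \<Inter> (B d ` {i. (d, i) \<in> \<Phi>})" for \<Phi> d
  have nhd: "basic_nhd f D (nhd \<Phi>)" if "finite \<Phi>" "\<Phi> \<subseteq> D \<times> UNIV" for \<Phi>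
  proof -
    have "{d. nhd \<Phi> d \<noteq> UNIV} \<subseteq> fst ` \<Phi>"
      by (force simp: nhd_def)
    moreover have "finite {i. (d, i) \<in> \<Phi>}" for d
      using finite_imageI[OF that(1), of snd] by (rule finite_subset[rotated]) force
    ultimately show ?thesis
      using that B(1) by (auto simp: basic_nhd_def nhd_def intro: finite_subset)
  qed
  define \<B> where "\<B> = (\<lambda>\<Phi>. S \<inter> {g. \<forall>d. g d \<in> nhd \<Phi> d}) ` {\<Phi>. finite \<Phi> \<and> \<Phi> \<subseteq> D \<times> UNIV}"
  show "\<exists>\<B>. countable \<B> \<and> (\<forall>V\<in>\<B>. openin ?X V) \<and> (\<forall>U. openin ?X U \<and> f \<in> U \<longrightarrow> (\<exists>V\<in>\<B>. f \<in> V \<and> V \<subseteq> U))"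
  proof (intro exI[of _ \<B>] conjI ballI allI impI)
    have "countable {\<Phi>. finite \<Phi> \<and> \<Phi> \<subseteq> D \<times> (UNIV :: nat set)}"
      using D(1) by (intro countable_Collect_finite_subset) simp
    then show "countable \<B>"
      unfolding \<B>_def by (rule countable_image)
    show "openin ?X V" if "V \<in> \<B>" for V
    proof -
      from that obtain \<Phi> where V: "V = S \<inter> {g. \<forall>d. g d \<in> nhd \<Phi> d}"
        and \<Phi>: "\<Phi> \<in> {\<Phi>. finite \<Phi> \<and> \<Phi> \<subseteq> D \<times> UNIV}"
        unfolding \<B>_def by (rule imageE)
      have "openin (product_topology (\<lambda>_. euclidean) UNIV) {g. \<forall>d. g d \<in> nhd \<Phi> d}"
        using \<Phi> nhd openin_basic_nhd by blast
      then show ?thesis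
        unfolding V by (rule openin_subtopology_Int2)
    qed
    fix U assume U: "openin ?X U \<and> f \<in> U"
    obtain W where W: "basic_nhd f UNIV W" "S \<inter> {g. \<forall>i. g i \<in> W i} \<subseteq> U"
      by (rule openin_subtopology_product_topology_basic_nhd[OF U[THEN conjunct1] U[THEN conjunct2]])
    obtain V where V: "basic_nhd f D V" "\<forall>g\<in>S. (\<forall>d. g d \<in> V d) \<longrightarrow> (\<forall>i. g i \<in> W i)"
      by (rule determined_by_basic_nhd[OF D(2) W(1)])
    have "\<forall>d. \<exists>i. B d i \<subseteq> V d"
      using V(1) B(2) unfolding basic_nhd_def by blast
    then obtain idx where idx: "\<And>d. B d (idx d) \<subseteq> V d"
      by metis
    define \<Phi> where "\<Phi> = (\<lambda>d. (d, idx d)) ` {d. V d \<noteq> UNIV}"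
    have \<Phi>: "finite \<Phi>" "\<Phi> \<subseteq> D \<times> UNIV"
      using V(1) by (auto simp: \<Phi>_def basic_nhd_def)
    have nhd_V: "nhd \<Phi> d \<subseteq> V d" for d
      using idx[of d] by (cases "V d = UNIV") (auto simp: nhd_def \<Phi>_def)
    have N_sub: "S \<inter> {g. \<forall>d. g d \<in> nhd \<Phi> d} \<subseteq> U"
    proof
      fix g assume g: "g \<in> S \<inter> {g. \<forall>d. g d \<in> nhd \<Phi> d}"
      then have "\<forall>d. g d \<in> V d"
        using nhd_V by auto
      then have "\<forall>i. g i \<in> W i"
        using V(2) g by auto
      then show "g \<in> U"
        using W(2) g by auto
    qed
    have "\<Phi> \<in> {\<Phi>. finite \<Phi> \<and> \<Phi> \<subseteq> D \<times> UNIV}"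
      using \<Phi> by blast
    then have N_mem: "S \<inter> {g. \<forall>d. g d \<in> nhd \<Phi> d} \<in> \<B>"
      unfolding \<B>_def by (rule rev_image_eqI) (rule refl)
    have "\<forall>d. f d \<in> nhd \<Phi> d"
      using nhd[OF \<Phi>] unfolding basic_nhd_def by blast
    then have N_f: "f \<in> S \<inter> {g. \<forall>d. g d \<in> nhd \<Phi> d}"
      using f by blast
    from N_f N_sub have "f \<in> S \<inter> {g. \<forall>d. g d \<in> nhd \<Phi> d} \<and> S \<inter> {g. \<forall>d. g d \<in> nhd \<Phi> d} \<subseteq> U"
      by (rule conjI)
    then show "\<exists>V\<in>\<B>. f \<in> V \<and> V \<subseteq> U"
      using N_mem by (rule bexI)
  qed
qed

lemma determined_by_finite_combination:
  assumes f: "f \<in> generalized_affine" and det: "determined_by generalized_affine f D y"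
      "determined_by generalized_affine f D z"
    and fy: "f y = ereal a" and fz: "f z = ereal b" and uv: "0 \<le> u" "0 \<le> v" "u + v = 1"
  shows "determined_by generalized_affine f D (u *\<^sub>R y + v *\<^sub>R z)"
proof (rule determined_by_pair[OF det])
  fix U assume "open U" "f (u *\<^sub>R y + v *\<^sub>R z) \<in> U"
  then have "open (ereal -` U)" "u * a + v * b \<in> ereal -` U"
    using generalized_affine_eq_combination[OF f fy fz uv] by (auto simp: open_ereal_vimage)
  then obtain e where e: "e > 0" "\<And>t. \<bar>t - (u * a + v * b)\<bar> < e \<Longrightarrow> ereal t \<in> U"
    unfolding open_real by (auto simp: dist_real_def)
  have "g (u *\<^sub>R y + v *\<^sub>R z) \<in> U"
    if g: "g \<in> generalized_affine" "g y \<in> {ereal (a - e)<..<ereal (a + e)}"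
      "g z \<in> {ereal (b - e)<..<ereal (b + e)}" for g
  proof -
    obtain t s where ts: "g y = ereal t" "g z = ereal s" "\<bar>t - a\<bar> < e" "\<bar>s - b\<bar> < e"
      using g(2,3) by (cases "g y"; cases "g z") auto
    have "(u * t + v * s) - (u * a + v * b) = u * (t - a) + v * (s - b)"
      by (simp add: algebra_simps)
    then have "\<bar>(u * t + v * s) - (u * a + v * b)\<bar> \<le> \<bar>u * (t - a)\<bar> + \<bar>v * (s - b)\<bar>"
      by (metis abs_triangle_ineq)
    also have "\<dots> = u * \<bar>t - a\<bar> + v * \<bar>s - b\<bar>"
      using uv by (simp add: abs_mult)
    also have "\<dots> < e"
      using convex_bound_lt[OF ts(3,4) uv] .
    finally show ?thesis
      using e(2) generalized_affine_eq_combination[OF g(1) ts(1,2) uv] by simp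
  qed
  then show "\<exists>A B. open A \<and> f y \<in> A \<and> open B \<and> f z \<in> B \<and>
      (\<forall>g\<in>generalized_affine. g y \<in> A \<longrightarrow> g z \<in> B \<longrightarrow> g (u *\<^sub>R y + v *\<^sub>R z) \<in> U)"
    using e(1) fy fz by (intro exI[of _ "{ereal (a - e)<..<ereal (a + e)}"] exI[of _ "{ereal (b - e)<..<ereal (b + e)}"]) auto
qed

lemma determined_by_PInf_combination:
  assumes f: "f \<in> generalized_affine" and det: "determined_by generalized_affine f D y"
      "determined_by generalized_affine f D z"
    and fy: "f y = \<infinity>" and fz: "f z \<noteq> -\<infinity>" and uv: "0 < u" "0 \<le> v" "u + v = 1"
  shows "determined_by generalized_affine f D (u *\<^sub>R y + v *\<^sub>R z)"
proof (rule determined_by_pair[OF det])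
  fix U assume "open U" "f (u *\<^sub>R y + v *\<^sub>R z) \<in> U"
  then obtain M where M: "{ereal M<..} \<subseteq> U"
    using open_PInfty generalized_affine_PInf_combination[OF f fy fz uv] by metis
  obtain b where b: "ereal b < f z"
    using ereal_dense2[of "-\<infinity>" "f z"] fz by auto
  define a where "a = (M - v * b) / u + 1"
  have "g (u *\<^sub>R y + v *\<^sub>R z) \<in> U"
    if g: "g \<in> generalized_affine" "ereal a < g y" "ereal b < g z" for g
  proof -
    have "ereal (u * a + v * b) \<le> g (u *\<^sub>R y + v *\<^sub>R z)"
      using g uv by (intro generalized_affine_ge_combination) auto
    moreover have "ereal M < ereal (u * a + v * b)"
      using uv(1) by (simp add: a_def field_simps)
    ultimately have "ereal M < g (u *\<^sub>R y + v *\<^sub>R z)"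
      using less_le_trans by blast
    then show ?thesis
      using M by auto
  qed
  then show "\<exists>A B. open A \<and> f y \<in> A \<and> open B \<and> f z \<in> B \<and>
      (\<forall>g\<in>generalized_affine. g y \<in> A \<longrightarrow> g z \<in> B \<longrightarrow> g (u *\<^sub>R y + v *\<^sub>R z) \<in> U)"
    using fy b by (intro exI[of _ "{ereal a<..}"] exI[of _ "{ereal b<..}"]) auto
qed

lemma convex_determined_by_not_MInf:
  assumes f: "f \<in> generalized_affine"
  shows "convex {x. f x \<noteq> -\<infinity> \<and> determined_by generalized_affine f D x}"
proof (rule convexI)
  fix y z and u v :: real
  assume y: "y \<in> {x. f x \<noteq> -\<infinity> \<and> determined_by generalized_affine f D x}"
    and z: "z \<in> {x. f x \<noteq> -\<infinity> \<and> determined_by generalized_affine f D x}"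
    and uv: "0 \<le> u" "0 \<le> v" "u + v = 1"
  have "f (u *\<^sub>R y + v *\<^sub>R z) \<noteq> -\<infinity>"
    using y z uv convexD[OF convex_generalized_affine_not_MInf[OF f]] by blast
  moreover have "determined_by generalized_affine f D (u *\<^sub>R y + v *\<^sub>R z)"
  proof (cases "u = 0 \<or> v = 0")
    case True
    then show ?thesis
      using y z uv by auto
  next
    case False
    then have "0 < u" "0 < v"
      using uv by auto
    consider "f y = \<infinity>" | "f z = \<infinity>" | "f y \<noteq> \<infinity>" "f z \<noteq> \<infinity>"
      by blast
    then show ?thesis
    proof cases
      case 1
      then show ?thesis
        using y z uv \<open>0 < u\<close> by (auto intro: determined_by_PInf_combination[OF f])
    next
      case 2
      then have "determined_by generalized_affine f D (v *\<^sub>R z + u *\<^sub>R y)"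
        using y z uv \<open>0 < v\<close> by (auto intro: determined_by_PInf_combination[OF f])
      then show ?thesis
        by (simp add: add.commute)
    next
      case 3
      then obtain a b where "f y = ereal a" "f z = ereal b"
        using y z by (cases "f y"; cases "f z") auto
      then show ?thesis
        using y z uv by (auto intro: determined_by_finite_combination[OF f])
    qed
  qed
  ultimately show "u *\<^sub>R y + v *\<^sub>R z \<in> {x. f x \<noteq> -\<infinity> \<and> determined_by generalized_affine f D x}"
    by simp
qed

lemma generalized_affine_not_MInf_countable_hull:
  fixes f :: "'a::euclidean_space \<Rightarrow> ereal"
  assumes f: "f \<in> generalized_affine"
  obtains Q where "countable Q" "Q \<subseteq> {x. f x \<noteq> -\<infinity>}" "{x. f x \<noteq> -\<infinity>} \<subseteq> convex hull Q"
proof -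
  have "- {x. f x \<noteq> -\<infinity>} = {x. - f x = \<infinity>}"
    by (auto simp: ereal_uminus_eq_reorder)
  then have "convex (- {x. f x \<noteq> -\<infinity>})"
    using convex_generalized_affine_PInf[OF generalized_affine_uminus[OF f]] by simp
  then show ?thesis
    by (rule hemispace_countable_hull[OF convex_generalized_affine_not_MInf[OF f]]) (rule that)
qed

lemma determined_by_convex_hull:
  assumes f: "f \<in> generalized_affine" and "Q \<subseteq> D" "Q \<subseteq> {x. f x \<noteq> -\<infinity>}"
    and "x \<in> convex hull Q" "f x \<noteq> -\<infinity>"
  shows "determined_by generalized_affine f D x"
proof -
  have "Q \<subseteq> {x. f x \<noteq> -\<infinity> \<and> determined_by generalized_affine f D x}"
    using assms(2,3) by (auto intro: determined_by_mem)
  then have "convex hull Q \<subseteq> {x. f x \<noteq> -\<infinity> \<and> determined_by generalized_affine f D x}"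
    by (rule hull_minimal) (rule convex_determined_by_not_MInf[OF f])
  then show ?thesis
    using assms(4) by blast
qed

lemma countable_determining_set:
  fixes f :: "'a::euclidean_space \<Rightarrow> ereal"
  assumes f: "f \<in> generalized_affine"
  shows "\<exists>D. countable D \<and> (\<forall>x. determined_by generalized_affine f D x)"
proof -
  have neg: "(\<lambda>x. - f x) \<in> generalized_affine"
    by (rule generalized_affine_uminus[OF f])
  obtain Q1 where Q1: "countable Q1" "Q1 \<subseteq> {x. f x \<noteq> -\<infinity>}" "{x. f x \<noteq> -\<infinity>} \<subseteq> convex hull Q1"
    by (rule generalized_affine_not_MInf_countable_hull[OF f])
  obtain Q2 where Q2: "countable Q2" "Q2 \<subseteq> {x. - f x \<noteq> -\<infinity>}"
      "{x. - f x \<noteq> -\<infinity>} \<subseteq> convex hull Q2"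
    by (rule generalized_affine_not_MInf_countable_hull[OF neg])
  have "determined_by generalized_affine f (Q1 \<union> Q2) x" for x
  proof (cases "f x = -\<infinity>")
    case True
    then have "x \<in> convex hull Q2" "- f x \<noteq> -\<infinity>"
      using Q2(3) by auto
    then have "determined_by generalized_affine (\<lambda>x. - f x) (Q1 \<union> Q2) x"
      by (intro determined_by_convex_hull[OF neg _ Q2(2)]) auto
    then show ?thesis
      by (rule determined_by_uminus) (rule generalized_affine_uminus)
  next
    case False
    then have "x \<in> convex hull Q1"
      using Q1(3) by auto
    then show ?thesis
      using False by (intro determined_by_convex_hull[OF f _ Q1(2)]) auto
  qed
  then show ?thesis
    using Q1(1) Q2(1) by blast
qed

theorem theorem3:
  shows "first_countable (pointwise_topology_G :: ('a::euclidean_space \<Rightarrow> ereal) topology)"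
  unfolding pointwise_topology_G_def
  by (rule first_countable_subtopology_product_topology[OF countable_determining_set])

end
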